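(* Let $k<n$ be positive integers. If there exists an antipodal $k$-splitting of $Q_2^n$, then there exists an antipodal $k$-splitting of $Q_2^{n+1}$.
   Context: $Q_2^n=\{0,1\}^n$. For $0\le m\le n$, an $m$-face of $Q_2^n$ is given by a tuple $a=(a_1,\dots,a_n)\in\{0,1,*\}^n$ with exactly $m$ entries equal to $*$; it denotes the set $\{x\in Q_2^n : x_i=a_i \text{ whenever } a_i\in\{0,1\}\}$. The direction of a face is the set of positions of its asterisks; two faces are parallel if they have the same direction, and two parallel faces $a,b$ are antipodal if $b_i=1-a_i$ at every non-asterisk position $i$. An antipodal $k$-splitting of $Q_2^n$ is a collection of exactly $2^k$ $(n-k)$-faces whose union is $Q_2^n$ and which contains no pair of parallel non-antipodal faces. *)

theory Defs
  imports Main
begin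

text \<open>A face of Q_2^n is a list of length n over option bool; None plays the role of the asterisk.\<close>

type_synonym face = "bool option list"

definition is_face :: "nat \<Rightarrow> nat \<Rightarrow> face \<Rightarrow> bool" where
  "is_face n m a \<longleftrightarrow> length a = n \<and> card {i. i < n \<and> a ! i = None} = m"

definition cube :: "nat \<Rightarrow> bool list set" where
  "cube n = {x. length x = n}"

definition face_set :: "face \<Rightarrow> bool list set" where
  "face_set a = {x. length x = length a \<and> (\<forall>i < length a. \<forall>v. a ! i = Some v \<longrightarrow> x ! i = v)}"

definition direction :: "face \<Rightarrow> nat set" where
  "direction a = {i. i < length a \<and> a ! i = None}"

definition parallel :: "face \<Rightarrow> face \<Rightarrow> bool" where
  "parallel a b \<longleftrightarrow> length a = length b \<and> direction a = direction b"

definition antipodal :: "face \<Rightarrow> face \<Rightarrow> bool" where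
  "antipodal a b \<longleftrightarrow> parallel a b \<and>
     (\<forall>i < length a. \<forall>v. a ! i = Some v \<longrightarrow> b ! i = Some (\<not> v))"

definition antipodal_splitting :: "nat \<Rightarrow> nat \<Rightarrow> face set \<Rightarrow> bool" where
  "antipodal_splitting n k F \<longleftrightarrow>
     finite F \<and> card F = 2 ^ k \<and>
     (\<forall>a \<in> F. is_face n (n - k) a) \<and>
     (\<Union>a \<in> F. face_set a) = cube n \<and>
     (\<forall>a \<in> F. \<forall>b \<in> F. a \<noteq> b \<and> parallel a b \<longrightarrow> antipodal a b)"

end

theory Submission
  imports Defs
begin

text \<open>Appending an asterisk to every face turns an antipodal \<open>k\<close>-splitting of \<open>Q\<^sub>2\<^sup>n\<close> into
  one of \<open>Q\<^sub>2\<^sup>n\<^sup>+\<^sup>1\<close>: each face \<open>a\<close> becomes the cylinder \<open>a \<times> {0,1}\<close>, so the faces still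
  cover the cube, their dimension grows by one as required for \<open>n + 1 - k\<close>, and appending
  the same asterisk everywhere neither creates nor destroys parallelism or antipodality.\<close>

definition extend_face :: "face \<Rightarrow> face" where
  "extend_face a = a @ [None]"

lemma length_extend_face [simp]: "length (extend_face a) = Suc (length a)"
  by (simp add: extend_face_def)

lemma inj_extend_face: "inj extend_face"
  by (auto simp: inj_def extend_face_def)

lemma direction_extend_face: "direction (extend_face a) = insert (length a) (direction a)"
  by (auto simp: direction_def extend_face_def nth_append less_Suc_eq)

lemma is_face_extend_face: "is_face n m a \<Longrightarrow> is_face (Suc n) (Suc m) (extend_face a)"
  using direction_extend_face[of a]
  by (simp add: is_face_def direction_def)

lemma parallel_extend_face_iff: "parallel (extend_face a) (extend_face b) \<longleftrightarrow> parallel a b"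
proof
  assume ext_par: "parallel (extend_face a) (extend_face b)"
  then have len: "length a = length b"
    by (simp add: parallel_def)
  moreover have "length a \<notin> direction a" "length a \<notin> direction b"
    using len by (auto simp: direction_def)
  ultimately have "direction a = direction b"
    using ext_par by (simp add: parallel_def direction_extend_face insert_ident)
  with len show "parallel a b"
    by (simp add: parallel_def)
qed (simp add: parallel_def direction_extend_face)

lemma antipodal_extend_face_iff: "antipodal (extend_face a) (extend_face b) \<longleftrightarrow> antipodal a b"
proof -
  have "(\<forall>i < length (extend_face a). \<forall>v. extend_face a ! i = Some v \<longrightarrow> extend_face b ! i = Some (\<not> v))
    \<longleftrightarrow> (\<forall>i < length a. \<forall>v. a ! i = Some v \<longrightarrow> b ! i = Some (\<not> v))" if "length a = length b"
    using that by (auto simp: extend_face_def nth_append less_Suc_eq)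
  then show ?thesis
    unfolding antipodal_def parallel_extend_face_iff by (auto simp: parallel_def)
qed

lemma face_set_extend_face:
  "face_set (extend_face a) = {x. length x = Suc (length a) \<and> butlast x \<in> face_set a}"
proof -
  have "x \<in> face_set (extend_face a) \<longleftrightarrow> length x = Suc (length a) \<and> butlast x \<in> face_set a" for x
    by (cases "length x = Suc (length a)")
      (auto simp: face_set_def extend_face_def nth_append nth_butlast less_Suc_eq)
  then show ?thesis
    by blast
qed

lemma covering_extend_face:
  assumes "\<forall>a \<in> F. length a = n" and "(\<Union>a \<in> F. face_set a) = cube n"
  shows "(\<Union>a \<in> extend_face ` F. face_set a) = cube (Suc n)"
proof
  show "(\<Union>a \<in> extend_face ` F. face_set a) \<subseteq> cube (Suc n)"
    using assms(1) by (auto simp: face_set_extend_face cube_def)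
next
  show "cube (Suc n) \<subseteq> (\<Union>a \<in> extend_face ` F. face_set a)"
  proof
    fix x assume x: "x \<in> cube (Suc n)"
    then have "butlast x \<in> cube n"
      by (simp add: cube_def)
    then obtain a where "a \<in> F" "butlast x \<in> face_set a"
      using assms(2) by blast
    with x assms(1) show "x \<in> (\<Union>a \<in> extend_face ` F. face_set a)"
      by (auto simp: face_set_extend_face cube_def)
  qed
qed

lemma antipodal_splitting_extend_face:
  assumes F: "antipodal_splitting n k F" and "k \<le> n"
  shows "antipodal_splitting (Suc n) k (extend_face ` F)"
  unfolding antipodal_splitting_def
proof (intro conjI ballI impI)
  show "finite (extend_face ` F)" "card (extend_face ` F) = 2 ^ k"
    using F inj_extend_face by (simp_all add: antipodal_splitting_def card_image inj_on_def inj_def)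
  have faces: "\<forall>a \<in> F. is_face n (n - k) a"
    using F by (simp add: antipodal_splitting_def)
  then show "(\<Union>a \<in> extend_face ` F. face_set a) = cube (Suc n)"
    using F by (intro covering_extend_face) (auto simp: is_face_def antipodal_splitting_def)
  show "is_face (Suc n) (Suc n - k) a" if "a \<in> extend_face ` F" for a
    using that faces is_face_extend_face \<open>k \<le> n\<close> by (auto simp: Suc_diff_le)
  show "antipodal a b" if "a \<in> extend_face ` F" "b \<in> extend_face ` F" "a \<noteq> b \<and> parallel a b" for a b
    using that F inj_extend_face
    by (auto simp: antipodal_splitting_def parallel_extend_face_iff antipodal_extend_face_iff inj_eq)
qed

theorem proposition1:
  fixes n k :: nat
  assumes "0 < k" and "k < n"
    and "\<exists>F. antipodal_splitting n k F"
  shows "\<exists>F. antipodal_splitting (Suc n) k F"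
  using assms(2,3) antipodal_splitting_extend_face by (meson less_imp_le)

end
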